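(* Let $n,m$ be integers with $m\geq 1$ and $n\geq 6m+7$. Then $$ gr_{3}(K_{3} : S(n,m)) = \begin{cases} 5\cdot\frac{n}{2} +1 & \text{ if $n$ is even,}\\ 5\cdot\frac{n-1}{2} + 2 & \text{ if $n$ is odd.} \end{cases} $$
   Context: For integers $n\geq m\geq 0$, the double star $S(n,m)$ is the graph obtained from the disjoint union of the stars $K_{1,n}$ and $K_{1,m}$ by adding an edge between their centers. A $k$-coloring of a graph is an assignment of one of $k$ colors to each edge. A subgraph is rainbow if all its edges have distinct colors and monochromatic if all its edges have the same color. For graphs $G,H$ and a positive integer $k$, the Gallai–Ramsey number $gr_k(G:H)$ is the minimum integer $N$ such that every $k$-coloring of the edges of the complete graph $K_N$ contains either a rainbow copy of $G$ or a monochromatic copy of $H$. *)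

theory Defs
  imports Main
begin

text \<open>Vertices of K_N are 0..N-1. An edge k-coloring of K_N is a symmetric function
  c on pairs of distinct vertices with values in {0..k-1} (values on the diagonal
  and outside the vertex set are irrelevant).\<close>

definition edge_coloring :: "nat \<Rightarrow> nat \<Rightarrow> (nat \<Rightarrow> nat \<Rightarrow> nat) \<Rightarrow> bool" where
  "edge_coloring k N c \<longleftrightarrow>
     (\<forall>x<N. \<forall>y<N. x \<noteq> y \<longrightarrow> c x y = c y x \<and> c x y < k)"

definition has_rainbow_K3 :: "nat \<Rightarrow> (nat \<Rightarrow> nat \<Rightarrow> nat) \<Rightarrow> bool" where
  "has_rainbow_K3 N c \<longleftrightarrow>
     (\<exists>x<N. \<exists>y<N. \<exists>z<N. x \<noteq> y \<and> y \<noteq> z \<and> x \<noteq> z \<and>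
        c x y \<noteq> c y z \<and> c y z \<noteq> c x z \<and> c x y \<noteq> c x z)"

definition has_mono_double_star :: "nat \<Rightarrow> nat \<Rightarrow> nat \<Rightarrow> (nat \<Rightarrow> nat \<Rightarrow> nat) \<Rightarrow> bool" where
  "has_mono_double_star n m N c \<longleftrightarrow>
     (\<exists>u<N. \<exists>v<N. \<exists>A B. u \<noteq> v \<and> A \<subseteq> {..<N} \<and> B \<subseteq> {..<N} \<and>
        card A = n \<and> card B = m \<and> A \<inter> B = {} \<and>
        u \<notin> A \<union> B \<and> v \<notin> A \<union> B \<and>
        (\<forall>a\<in>A. c u a = c u v) \<and> (\<forall>b\<in>B. c v b = c u v))"

definition gr_K3_double_star :: "nat \<Rightarrow> nat \<Rightarrow> nat \<Rightarrow> nat" where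
  "gr_K3_double_star k n m =
     (LEAST N. \<forall>c. edge_coloring k N c \<longrightarrow> has_rainbow_K3 N c \<or> has_mono_double_star n m N c)"

end

theory Submission
  imports Defs
begin

text \<open>
  Lower bound: for \<open>k = \<lfloor>n/2\<rfloor>\<close>, split \<open>n + 3 k\<close> vertices into blocks of sizes \<open>k, k, k, k, n - k\<close>,
  give edges inside a block colour 2 and edges between blocks the colour of the corresponding
  pair of vertices of a pentagon with sides of colour 0 and diagonals of colour 1. There is no
  rainbow triangle, and every vertex has at most \<open>n\<close> neighbours in each colour, so there is not
  even a monochromatic star with \<open>n + 1\<close> edges.

  Upper bound: by Gallai's theorem some colour \<open>g\<close> has a disconnected colour class, and every
  vertex outside a \<open>g\<close>-component sees the whole component in one of the two other colours.
  Two adjacent vertices cannot have \<open>n + m\<close> and \<open>m\<close> further neighbours in the colour of their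
  edge; together with a double counting argument this shows that a set of vertices in which one
  colour is sparse has fewer than \<open>(5 n - 2 m - 1) / 2\<close> vertices. It follows that every
  \<open>g\<close>-component has more than \<open>m\<close> and at most \<open>n + m\<close> vertices, that the vertices outside a
  component lie in at most four further components, and finally that
  \<open>N \<le> M + 4 min M (n - M) < n + 3 \<lfloor>n/2\<rfloor> + 1\<close> for the largest component size \<open>M\<close>.
\<close>

lemma obtain_disjoint_subsets_with_card:
  fixes A B :: "'a set"
  assumes "finite A" "finite B" "n \<le> card A" "m \<le> card B" "n + m \<le> card (A \<union> B)"
  obtains A' B' where "A' \<subseteq> A" "B' \<subseteq> B" "card A' = n" "card B' = m" "A' \<inter> B' = {}"
proof (cases "m \<le> card (B - A)")
  case True
  obtain B' where "B' \<subseteq> B - A" "card B' = m" using obtain_subset_with_card_n[OF True] by metis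
  moreover obtain A' where "A' \<subseteq> A" "card A' = n" using obtain_subset_with_card_n[OF assms(3)] by metis
  ultimately show thesis using that[of A' B'] by auto
next
  case False
  text \<open>Complete \<open>B - A\<close> to \<open>m\<close> elements by a set \<open>C\<close> taken from \<open>A \<inter> B\<close>, and pick \<open>A'\<close> in \<open>A - C\<close>.\<close>
  have fin: "finite (B - A)" "finite (B \<inter> A)" using assms by auto
  have "card B = card (B \<inter> A) + card (B - A)" using card_Int_Diff assms(2) by blast
  then have "m - card (B - A) \<le> card (B \<inter> A)" using assms(4) by linarith
  then obtain C where C: "C \<subseteq> B \<inter> A" "card C = m - card (B - A)"
    using obtain_subset_with_card_n by metis
  have finC: "finite C" using C fin finite_subset by blast
  have "card (A \<union> B) = card A + card (B - A)"
    using card_Un_disjoint[of A "B - A"] assms(1,2) by simp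
  moreover have "card (A - C) = card A - card C" using card_Diff_subset[OF finC] C by auto
  ultimately have "n \<le> card (A - C)" using C assms(5) False by linarith
  then obtain A' where A': "A' \<subseteq> A - C" "card A' = n" using obtain_subset_with_card_n by metis
  have "card ((B - A) \<union> C) = card (B - A) + card C"
    using card_Un_disjoint[OF fin(1) finC] C by auto
  then have "card ((B - A) \<union> C) = m" using C False by linarith
  then show thesis using that[of A' "(B - A) \<union> C"] A' C by auto
qed

lemma obtain_frequent_partner:
  assumes "finite X" "finite Z" and deg: "\<And>x. x \<in> X \<Longrightarrow> q \<le> card {z\<in>Z. R x z}"
    and "card Z * p < card X * q"
  obtains z where "z \<in> Z" "p < card {x\<in>X. R x z}"
proof -
  have card_filter: "card {y\<in>Y. P y} = (\<Sum>y\<in>Y. if P y then 1 else 0)" if "finite Y"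
    for Y and P :: "'c \<Rightarrow> bool"
  proof -
    have "{y\<in>Y. P y} = Y \<inter> {y. P y}" by auto
    then show ?thesis using that by (simp add: sum.If_cases)
  qed
  have "card X * q \<le> (\<Sum>x\<in>X. card {z\<in>Z. R x z})"
    using sum_bounded_below[of X q "\<lambda>x. card {z\<in>Z. R x z}"] deg by simp
  also have "\<dots> = (\<Sum>z\<in>Z. card {x\<in>X. R x z})"
    unfolding card_filter[OF assms(1)] card_filter[OF assms(2)] by (rule sum.swap)
  finally have "\<not> (\<forall>z\<in>Z. card {x\<in>X. R x z} \<le> p)"
    using sum_bounded_above[of Z "\<lambda>z. card {x\<in>X. R x z}" p] assms(4) by auto
  then show thesis using that by (auto simp: not_le)
qed

lemma colour_cases_3:
  fixes x g a b :: nat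
  assumes "distinct [g, a, b]" "g < 3" "a < 3" "b < 3" "x < 3"
  shows "x = g \<or> x = a \<or> x = b"
  using assms by simp linarith

lemma exists_third_colour:
  fixes a b :: nat
  obtains d where "d < 3" "d \<noteq> a" "d \<noteq> b"
proof -
  have "\<exists>d\<in>{0, 1, 2 :: nat}. d \<noteq> a \<and> d \<noteq> b" by auto
  then obtain d :: nat where "d \<in> {0, 1, 2}" "d \<noteq> a" "d \<noteq> b" by blast
  then show thesis using that[of d] by auto
qed

section \<open>Gallai colourings\<close>

locale gallai_colouring =
  fixes N :: nat and c :: "nat \<Rightarrow> nat \<Rightarrow> nat"
  assumes colour_sym: "\<And>x y. x < N \<Longrightarrow> y < N \<Longrightarrow> x \<noteq> y \<Longrightarrow> c x y = c y x"
    and no_rainbow: "\<And>x y z. \<lbrakk>x < N; y < N; z < N; x \<noteq> y; y \<noteq> z; x \<noteq> z\<rbrakk>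
      \<Longrightarrow> c x y = c y z \<or> c y z = c x z \<or> c x y = c x z"
begin

lemma colour_sym_on:
  "S \<subseteq> {..<N} \<Longrightarrow> x \<in> S \<Longrightarrow> y \<in> S \<Longrightarrow> x \<noteq> y \<Longrightarrow> c x y = c y x"
  using colour_sym by blast

definition colour_closed :: "nat \<Rightarrow> nat set \<Rightarrow> nat set \<Rightarrow> bool" where
  "colour_closed g S T \<longleftrightarrow> T \<subseteq> S \<and> (\<forall>x\<in>T. \<forall>y\<in>S - T. c x y \<noteq> g)"

text \<open>The vertex set of the connected component of \<open>u\<close> in the graph of \<open>g\<close>-coloured edges
  inside \<open>S\<close>.\<close>
definition colour_component :: "nat \<Rightarrow> nat set \<Rightarrow> nat \<Rightarrow> nat set" where
  "colour_component g S u = \<Inter>{T. colour_closed g S T \<and> u \<in> T}"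

lemma colour_component_closed: "u \<in> S \<Longrightarrow> colour_closed g S (colour_component g S u)"
  unfolding colour_closed_def colour_component_def
  by (intro conjI; clarsimp simp: colour_closed_def) blast

lemma mem_colour_component: "u \<in> S \<Longrightarrow> u \<in> colour_component g S u"
  by (auto simp: colour_component_def)

lemma colour_component_least: "colour_closed g S T \<Longrightarrow> u \<in> T \<Longrightarrow> colour_component g S u \<subseteq> T"
  by (auto simp: colour_component_def)

lemma colour_component_subset: "u \<in> S \<Longrightarrow> colour_component g S u \<subseteq> S"
  using colour_component_closed colour_closed_def by blast

lemma colour_closed_Diff:
  assumes "S \<subseteq> {..<N}" "colour_closed g S X" "colour_closed g S Y"
  shows "colour_closed g S (X - Y)"
  unfolding colour_closed_def
proof (intro conjI ballI)
  show "X - Y \<subseteq> S" using assms(2) by (auto simp: colour_closed_def)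
  fix x y assume x: "x \<in> X - Y" and y: "y \<in> S - (X - Y)"
  have xS: "x \<in> S" using x assms(2) by (auto simp: colour_closed_def)
  show "c x y \<noteq> g"
  proof (cases "y \<in> X")
    case False then show ?thesis using assms(2) x y by (auto simp: colour_closed_def)
  next
    case True
    then have "c y x \<noteq> g" using assms(3) x y xS by (auto simp: colour_closed_def)
    moreover have "x \<noteq> y" using x y True by auto
    ultimately show ?thesis using colour_sym_on[OF assms(1) xS, of y] y by auto
  qed
qed

lemma colour_component_eq:
  assumes "S \<subseteq> {..<N}" "u \<in> S" "w \<in> colour_component g S u"
  shows "colour_component g S w = colour_component g S u"
proof -
  let ?K = "colour_component g S"
  have wS: "w \<in> S" using assms colour_component_subset by blast
  have "?K w \<subseteq> ?K u" using colour_component_least colour_component_closed assms by blast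
  moreover have "u \<in> ?K w"
  proof (rule ccontr)
    assume "u \<notin> ?K w"
    then have "colour_closed g S (?K u - ?K w)" "u \<in> ?K u - ?K w"
      using colour_closed_Diff colour_component_closed assms wS mem_colour_component by auto
    then have "?K u \<subseteq> ?K u - ?K w" using colour_component_least by blast
    then show False using assms(3) mem_colour_component wS by blast
  qed
  then have "?K u \<subseteq> ?K w" using colour_component_least colour_component_closed wS by blast
  ultimately show ?thesis by auto
qed

lemma colour_component_disjoint:
  assumes "S \<subseteq> {..<N}" "u \<in> S" "w \<in> S" "w \<notin> colour_component g S u"
    "t \<in> colour_component g S w"
  shows "t \<notin> colour_component g S u"
  using colour_component_eq[OF assms(1)] mem_colour_component assms by metis

lemma colour_component_sym:
  assumes "S \<subseteq> {..<N}" "u \<in> S" "w \<in> S" "w \<notin> colour_component g S u"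
  shows "u \<notin> colour_component g S w"
  using colour_component_disjoint[OF assms] mem_colour_component[OF assms(2)] by blast

lemma colour_leaving_component:
  assumes "u \<in> S" "w \<in> S - colour_component g S u"
  shows "c u w \<noteq> g"
  using colour_component_closed[OF assms(1), of g] mem_colour_component[OF assms(1)] assms
  by (auto simp: colour_closed_def)

text \<open>A vertex outside a \<open>g\<close>-component sees the whole component in one colour: otherwise the
  vertices it sees in the colour of \<open>t\<^sub>1\<close> would form a proper \<open>g\<close>-closed part of the
  component, since a \<open>g\<close>-edge leaving that part would close a rainbow triangle.\<close>
lemma colour_to_component_const:
  assumes S: "S \<subseteq> {..<N}" and u: "u \<in> S" and w: "w \<in> S - colour_component g S u"
    and t: "t\<^sub>1 \<in> colour_component g S u" "t\<^sub>2 \<in> colour_component g S u"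
  shows "c w t\<^sub>1 = c w t\<^sub>2"
proof (rule ccontr)
  assume ne: "c w t\<^sub>1 \<noteq> c w t\<^sub>2"
  define C where "C = colour_component g S u"
  define P where "P = {t \<in> C. c w t = c w t\<^sub>1}"
  have CS: "C \<subseteq> S" and C_closed: "colour_closed g S C"
    using colour_component_subset colour_component_closed u C_def by auto
  have w_C: "c w t \<noteq> g" if "t \<in> C" for t
  proof -
    have "t \<in> S" "colour_component g S t = C" using that CS colour_component_eq[OF S u] C_def by auto
    then have "c t w \<noteq> g" using colour_leaving_component[of t S w g] w C_def by auto
    moreover have "t \<noteq> w" using that w C_def by auto
    ultimately show ?thesis using colour_sym_on[OF S, of w t] \<open>t \<in> S\<close> w by auto
  qed
  have P_closed: "colour_closed g S P"
    unfolding colour_closed_def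
  proof (intro conjI ballI)
    show "P \<subseteq> S" using CS P_def by auto
    fix x y assume x: "x \<in> P" and y: "y \<in> S - P"
    show "c x y \<noteq> g"
    proof (cases "y \<in> C")
      case False then show ?thesis using C_closed x y P_def by (auto simp: colour_closed_def)
    next
      case True
      have "x \<in> C" "c w y \<noteq> c w x" using x y True P_def by auto
      moreover have "w < N" "x < N" "y < N" "w \<noteq> x" "x \<noteq> y" "w \<noteq> y"
        using w True x y CS S C_def P_def by auto
      moreover note no_rainbow[of w x y] w_C[of x] w_C[of y] True
      ultimately show ?thesis by fastforce
    qed
  qed
  consider "u \<in> P" | "u \<in> C - P" using mem_colour_component[OF u] C_def by blast
  then show False
  proof cases
    case 1
    then have "C \<subseteq> P" using colour_component_least[OF P_closed] C_def by blast
    then show False using t ne P_def C_def by auto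
  next
    case 2
    then have "C \<subseteq> C - P"
      using colour_component_least[OF colour_closed_Diff[OF S C_closed P_closed]] C_def by blast
    then show False using t P_def C_def by auto
  qed
qed

lemma exists_outside_component:
  assumes "S \<subseteq> {..<N}" "T \<noteq> {}" "T \<subset> S" "colour_closed g S T" "u \<in> S"
  shows "\<exists>w\<in>S. w \<notin> colour_component g S u"
proof (cases "u \<in> T")
  case True
  then show ?thesis using colour_component_least assms by blast
next
  case False
  obtain w where w: "w \<in> T" using assms by blast
  have "w \<notin> colour_component g S u"
  proof
    assume "w \<in> colour_component g S u"
    then have "colour_component g S w = colour_component g S u"
      using colour_component_eq assms by blast
    moreover have "colour_component g S w \<subseteq> T" using colour_component_least assms w by blast
    ultimately show False using mem_colour_component assms False by blast
  qed
  then show ?thesis using w assms by blast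
qed

lemma colour_closed_insert_component:
  assumes F: "insert x F \<subseteq> {..<N}" "x \<notin> F" and w: "w \<in> F"
    and no_g: "\<forall>t\<in>colour_component g F w. c x t \<noteq> g"
  shows "colour_closed g (insert x F) (colour_component g F w)"
  unfolding colour_closed_def
proof (intro conjI ballI)
  show "colour_component g F w \<subseteq> insert x F" using colour_component_subset w by auto
  fix t y assume t: "t \<in> colour_component g F w" and y: "y \<in> insert x F - colour_component g F w"
  have tF: "t \<in> F" using t colour_component_subset w by auto
  show "c t y \<noteq> g"
  proof (cases "y = x")
    case True
    moreover have "t \<noteq> x" using tF F(2) by auto
    ultimately show ?thesis using no_g t colour_sym_on[OF F(1), of t x] tF by auto
  next
    case False
    then show ?thesis
      using colour_component_closed[OF w, of g] t y by (auto simp: colour_closed_def)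
  qed
qed

lemma colour_through_g_neighbour:
  assumes F: "insert x F \<subseteq> {..<N}" "x \<notin> F"
    and a: "a \<in> F" "c x a = g" and y: "y \<in> F" "c x y \<noteq> g" "a \<notin> colour_component g F y"
  shows "c a y = c x y"
proof -
  have FN: "F \<subseteq> {..<N}" using F by auto
  have "c y a \<noteq> g" using colour_leaving_component a y by blast
  moreover have "a \<noteq> y" using y mem_colour_component by blast
  ultimately have "c a y \<noteq> g" using colour_sym_on[OF FN a(1) y(1)] by simp
  moreover have "x \<noteq> a" "x \<noteq> y" using a y F by auto
  ultimately show ?thesis using no_rainbow[of x a y] F a y \<open>a \<noteq> y\<close> by auto
qed

lemma colour_from_new_vertex_const:
  assumes F: "insert x F \<subseteq> {..<N}" "x \<notin> F"
    and disconnected: "\<forall>b\<in>F. \<exists>w\<in>F. w \<notin> colour_component g F b"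
    and g_nbr: "\<forall>w\<in>F. \<exists>t\<in>colour_component g F w. c x t = g"
    and b: "b \<in> F" "c x b \<noteq> g" and d: "d \<in> F" "c x d \<noteq> g"
  shows "c x b = c x d"
proof -
  let ?K = "colour_component g F"
  have FN: "F \<subseteq> {..<N}" using F by auto
  show ?thesis
  proof (cases "d \<in> ?K b")
    case True
    obtain w where w: "w \<in> F" "w \<notin> ?K b" using disconnected b by blast
    obtain a where a: "a \<in> ?K w" "c x a = g" using g_nbr w by blast
    have aF: "a \<in> F" using a colour_component_subset w by auto
    have a_b: "a \<notin> ?K b" using colour_component_disjoint[OF FN b(1) w a(1)] .
    then have a_d: "a \<notin> ?K d" using colour_component_eq[OF FN b(1) True] by simp
    have "c a b = c a d"
      using colour_to_component_const[OF FN b(1) _ mem_colour_component[OF b(1)] True] aF a_b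
      by blast
    then show ?thesis
      using colour_through_g_neighbour[OF F aF a(2)] b d a_b a_d by metis
  next
    case False
    have b_d: "b \<notin> ?K d"
      using colour_component_sym[OF FN b(1) d(1) False] .
    obtain a where a: "a \<in> ?K d" "c x a = g" using g_nbr d by blast
    obtain a' where a': "a' \<in> ?K b" "c x a' = g" using g_nbr b by blast
    have aF: "a \<in> F" "a' \<in> F" using a a' colour_component_subset b d by auto
    have a_b: "a \<notin> ?K b" using colour_component_disjoint[OF FN b(1) d(1) False a(1)] .
    have a'_d: "a' \<notin> ?K d" using colour_component_disjoint[OF FN d(1) b(1) b_d a'(1)] .
    have "c b a = c b d"
      using colour_to_component_const[OF FN d(1) _ a(1) mem_colour_component[OF d(1)]] b b_d
      by blast
    moreover have "c d a' = c d b"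
      using colour_to_component_const[OF FN b(1) _ a'(1) mem_colour_component[OF b(1)]] d False
      by blast
    moreover have "a \<noteq> b" "a' \<noteq> d" "b \<noteq> d"
      using a_b a'_d False mem_colour_component b d by blast+
    then have "c b a = c a b" "c d a' = c a' d" "c b d = c d b"
      using colour_sym_on[OF FN] aF b d by metis+
    moreover have "c a b = c x b" "c a' d = c x d"
      using colour_through_g_neighbour[OF F aF(1) a(2) b a_b]
        colour_through_g_neighbour[OF F aF(2) a'(2) d a'_d] by auto
    ultimately show ?thesis by simp
  qed
qed

end

locale gallai_3_colouring = gallai_colouring +
  assumes colour_less_3: "\<And>x y. x < N \<Longrightarrow> y < N \<Longrightarrow> x \<noteq> y \<Longrightarrow> c x y < 3"
begin

lemma gallai_cut_insert:
  assumes F: "insert x F \<subseteq> {..<N}" "x \<notin> F"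
    and T: "g < 3" "T \<noteq> {}" "T \<subset> F" "colour_closed g F T"
  shows "\<exists>g<3. \<exists>T. T \<noteq> {} \<and> T \<subset> insert x F \<and> colour_closed g (insert x F) T"
proof -
  let ?K = "colour_component g F"
  have FN: "F \<subseteq> {..<N}" using F by auto
  have x_proper: "{x} \<noteq> {} \<and> {x} \<subset> insert x F" using T F by auto
  show ?thesis
  proof (cases "\<exists>w\<in>F. \<forall>t\<in>?K w. c x t \<noteq> g")
    case True
    then obtain w where w: "w \<in> F" "\<forall>t\<in>?K w. c x t \<noteq> g" by blast
    have "?K w \<noteq> {}" "?K w \<subset> insert x F"
      using mem_colour_component[OF w(1)] colour_component_subset[OF w(1)] F(2) by blast+
    then show ?thesis using colour_closed_insert_component[OF F w] T(1) by blast
  next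
    case False
    then have g_nbr: "\<forall>w\<in>F. \<exists>t\<in>?K w. c x t = g" by blast
    have disconnected: "\<forall>b\<in>F. \<exists>w\<in>F. w \<notin> ?K b"
      using exists_outside_component[OF FN T(2-4)] by blast
    text \<open>All non-\<open>g\<close> edges from \<open>x\<close> to \<open>F\<close> share one colour; a third colour avoids them.\<close>
    obtain d where d: "d < 3" "\<forall>y\<in>F. c x y \<noteq> d"
    proof (cases "\<exists>b\<in>F. c x b \<noteq> g")
      case True
      then obtain b where b: "b \<in> F" "c x b \<noteq> g" by blast
      obtain d where d: "d < 3" "d \<noteq> g" "d \<noteq> c x b" using exists_third_colour by blast
      have "c x y \<noteq> d" if "y \<in> F" for y
        using colour_from_new_vertex_const[OF F disconnected g_nbr b that] d by (cases "c x y = g") auto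
      then show thesis using that d(1) by blast
    next
      case False
      obtain d where "d < 3" "d \<noteq> g" using exists_third_colour by blast
      then show thesis using that False by blast
    qed
    then have "colour_closed d (insert x F) {x}" by (auto simp: colour_closed_def)
    then show ?thesis using d(1) x_proper by blast
  qed
qed

theorem gallai_cut:
  assumes "S \<subseteq> {..<N}" "2 \<le> card S"
  shows "\<exists>g<3. \<exists>T. T \<noteq> {} \<and> T \<subset> S \<and> colour_closed g S T"
  using finite_subset[OF assms(1) finite_lessThan] assms
proof (induction S rule: finite_induct)
  case empty then show ?case by simp
next
  case (insert x F)
  show ?case
  proof (cases "2 \<le> card F")
    case True
    then obtain g T where "g < 3" "T \<noteq> {}" "T \<subset> F" "colour_closed g F T"
      using insert by auto
    then show ?thesis using gallai_cut_insert[OF insert.prems(1) insert.hyps(2)] by blast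
  next
    case False
    then have "card F = 1" using insert by auto
    then obtain a where a: "F = {a}" using card_1_singletonE by blast
    have "x < N" "a < N" "x \<noteq> a" using insert a by auto
    obtain d where "d < 3" "d \<noteq> c x a" using exists_third_colour by blast
    then have "colour_closed d (insert x F) {x}" using a by (auto simp: colour_closed_def)
    moreover have "{x} \<subset> insert x F" using a \<open>x \<noteq> a\<close> by auto
    ultimately show ?thesis using \<open>d < 3\<close> by blast
  qed
qed

end

section \<open>Colourings without a monochromatic double star\<close>

lemma has_mono_double_starI:
  assumes "u < N" "v < N" "u \<noteq> v" "A \<subseteq> {..<N}" "B \<subseteq> {..<N}" "card A = n" "card B = m"
    "A \<inter> B = {}" "u \<notin> A \<union> B" "v \<notin> A \<union> B" "\<forall>a\<in>A. c u a = c u v" "\<forall>b\<in>B. c v b = c u v"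
  shows "has_mono_double_star n m N c"
  unfolding has_mono_double_star_def using assms by blast

locale double_star_free = gallai_3_colouring +
  fixes n m :: nat
  assumes no_double_star: "\<not> has_mono_double_star n m N c"
    and m_pos: "1 \<le> m" and n_large: "6 * m + 7 \<le> n"
begin

definition colour_nbhd :: "nat \<Rightarrow> nat set \<Rightarrow> nat \<Rightarrow> nat set" where
  "colour_nbhd k S u = {w \<in> S. w \<noteq> u \<and> c u w = k}"

lemma finite_colour_nbhd: "S \<subseteq> {..<N} \<Longrightarrow> finite (colour_nbhd k S u)"
  unfolding colour_nbhd_def by (rule finite_subset[of _ "{..<N}"]) auto

lemma colour_nbhd_mono: "S \<subseteq> S' \<Longrightarrow> colour_nbhd k S u \<subseteq> colour_nbhd k S' u"
  unfolding colour_nbhd_def by auto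

lemma colour_nbhd_sym:
  assumes "S \<subseteq> {..<N}" "u \<in> S" "v \<in> colour_nbhd k S u"
  shows "u \<in> colour_nbhd k S v"
  using assms colour_sym_on[OF assms(1), of u v] unfolding colour_nbhd_def by auto

lemma no_double_star_nbhds:
  assumes S: "S \<subseteq> {..<N}" and u: "u \<in> S" and v: "v \<in> colour_nbhd k S u"
    and A: "A \<subseteq> colour_nbhd k S u - {v}" and B: "B \<subseteq> colour_nbhd k S v - {u}"
    and card: "n \<le> card A" "m \<le> card B" "n + m \<le> card (A \<union> B)"
  shows False
proof -
  have "finite A" "finite B"
    using finite_subset[OF _ finite_colour_nbhd[OF S]] A B by (meson Diff_subset order_trans)+
  then obtain A' B' where AB': "A' \<subseteq> A" "B' \<subseteq> B" "card A' = n" "card B' = m" "A' \<inter> B' = {}"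
    using obtain_disjoint_subsets_with_card[OF _ _ card] by metis
  have uv: "u < N" "v < N" "u \<noteq> v" "c u v = k" using u v S unfolding colour_nbhd_def by auto
  have "A' \<subseteq> {..<N}" "u \<notin> A'" "v \<notin> A'" "\<forall>a\<in>A'. c u a = c u v"
    using AB'(1) A S uv(4) unfolding colour_nbhd_def by auto
  moreover have "B' \<subseteq> {..<N}" "u \<notin> B'" "v \<notin> B'" "\<forall>b\<in>B'. c v b = c u v"
    using AB'(2) B S uv(4) unfolding colour_nbhd_def by auto
  ultimately have "has_mono_double_star n m N c"
    using uv AB'(3-5) by (intro has_mono_double_starI[of u N v A' B']) auto
  with no_double_star show False ..
qed

lemma card_nbhd_of_neighbour_le:
  assumes S: "S \<subseteq> {..<N}" and u: "u \<in> S" and v: "v \<in> colour_nbhd k S u"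
    and big: "n + m < card (colour_nbhd k S u)"
  shows "card (colour_nbhd k S v) \<le> m"
proof (rule ccontr)
  assume big_v: "\<not> ?thesis"
  let ?A = "colour_nbhd k S u - {v}" and ?B = "colour_nbhd k S v - {u}"
  have fin: "finite (colour_nbhd k S u)" "finite (colour_nbhd k S v)"
    using finite_colour_nbhd[OF S] by auto
  have "n + m \<le> card ?A" using big v fin by (simp add: card_Diff_singleton)
  moreover have "m \<le> card ?B"
    using big_v colour_nbhd_sym[OF S u v] fin by (simp add: card_Diff_singleton)
  moreover have "card ?A \<le> card (?A \<union> ?B)" using fin by (intro card_mono) auto
  ultimately show False using no_double_star_nbhds[OF S u v order_refl order_refl] by linarith
qed

lemma card_le_colour_nbhds:
  assumes S: "S \<subseteq> {..<N}" and y: "y \<in> S"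
    and colours: "distinct [a, b, d]" "a < 3" "b < 3" "d < 3"
  shows "card S \<le> card (colour_nbhd a S y) + card (colour_nbhd b S y) + card (colour_nbhd d S y) + 1"
proof -
  let ?U = "colour_nbhd a S y \<union> colour_nbhd b S y \<union> colour_nbhd d S y"
  have "S \<subseteq> insert y ?U"
  proof
    fix w assume w: "w \<in> S"
    show "w \<in> insert y ?U"
    proof (cases "w = y")
      case False
      then have "c y w < 3" using colour_less_3 S w y by blast
      then show ?thesis using colour_cases_3[OF colours] w False unfolding colour_nbhd_def by auto
    qed simp
  qed
  then have "card S \<le> card (insert y ?U)" using finite_colour_nbhd[OF S] by (intro card_mono) auto
  also have "\<dots> \<le> card ?U + 1" using finite_colour_nbhd[OF S] by (simp add: card_insert_if)
  also have "\<dots> \<le> card (colour_nbhd a S y) + card (colour_nbhd b S y) + card (colour_nbhd d S y) + 1"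
    using card_Un_le[of "colour_nbhd a S y \<union> colour_nbhd b S y" "colour_nbhd d S y"]
      card_Un_le[of "colour_nbhd a S y" "colour_nbhd b S y"] by linarith
  finally show ?thesis .
qed

lemma card_outside_colour_nbhd:
  assumes S: "S \<subseteq> {..<N}" and u: "u \<in> S"
  shows "card (S - insert u (colour_nbhd k S u)) + card (colour_nbhd k S u) + 1 = card S"
proof -
  let ?X = "colour_nbhd k S u"
  have finS: "finite S" using finite_subset[OF S finite_lessThan] .
  have uX: "insert u ?X \<subseteq> S" using u unfolding colour_nbhd_def by auto
  have "card (insert u ?X) = card ?X + 1" using finite_colour_nbhd[OF S] by (simp add: colour_nbhd_def)
  moreover have "card (S - insert u ?X) = card S - card (insert u ?X)"
    using card_Diff_subset[OF _ uX] finite_colour_nbhd[OF S] by simp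
  moreover have "card (insert u ?X) \<le> card S" using card_mono[OF finS uX] .
  ultimately show ?thesis by linarith
qed

context
  fixes Y :: "nat set" and a k k' :: nat
  assumes Y: "Y \<subseteq> {..<N}"
    and colours: "distinct [a, k, k']" "a < 3" "k < 3" "k' < 3"
    and large: "5 * n \<le> 2 * card Y + 2 * m + 1"
    and sparse: "\<forall>y\<in>Y. card (colour_nbhd a Y y) < m"
begin

lemma obtain_other_colour:
  assumes "j \<in> {k, k'}"
  obtains j' where "distinct [a, j, j']" "j < 3" "j' < 3" "j' \<in> {k, k'}"
  using assms colours that by auto

lemma card_colour_nbhd_le_in_sparse:
  assumes j: "j \<in> {k, k'}" and u: "u \<in> Y"
  shows "card (colour_nbhd j Y u) \<le> n + m"
proof (rule ccontr)
  assume big: "\<not> ?thesis"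
  obtain j' where cols: "distinct [a, j, j']" "j < 3" "j' < 3" using obtain_other_colour[OF j] .
  define X where "X = colour_nbhd j Y u"
  have XY: "X \<subseteq> Y" unfolding X_def colour_nbhd_def by auto
  have small_j: "card (colour_nbhd j Y v) \<le> m" if "v \<in> X" for v
    using card_nbhd_of_neighbour_le[OF Y u] that big X_def by simp
  have big_j': "n + m < card (colour_nbhd j' Y v)" if "v \<in> X" for v
  proof -
    have "card Y \<le> card (colour_nbhd a Y v) + card (colour_nbhd j Y v) + card (colour_nbhd j' Y v) + 1"
      using card_le_colour_nbhds[OF Y _ cols(1) colours(2) cols(2,3)] that XY by blast
    moreover have "card (colour_nbhd a Y v) < m" using sparse that XY by auto
    ultimately show ?thesis using small_j[OF that] large n_large by linarith
  qed
  have no_j': "c v v' \<noteq> j'" if "v \<in> X" "v' \<in> X" "v \<noteq> v'" for v v'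
  proof
    assume "c v v' = j'"
    then have "v' \<in> colour_nbhd j' Y v" using that XY unfolding colour_nbhd_def by auto
    then have "card (colour_nbhd j' Y v') \<le> m"
      using card_nbhd_of_neighbour_le[OF Y _ _ big_j'[OF that(1)]] that XY by blast
    then show False using big_j'[OF that(2)] by linarith
  qed
  have "X \<noteq> {}" using big X_def by auto
  then obtain v where v: "v \<in> X" by blast
  have "X - {v} \<subseteq> colour_nbhd a Y v \<union> colour_nbhd j Y v"
  proof
    fix w assume w: "w \<in> X - {v}"
    then have "c v w < 3" using colour_less_3 Y XY v by blast
    then have "c v w = a \<or> c v w = j"
      using colour_cases_3[OF cols(1) colours(2) cols(2,3)] no_j'[of v w] w v by auto
    then show "w \<in> colour_nbhd a Y v \<union> colour_nbhd j Y v" using w XY unfolding colour_nbhd_def by auto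
  qed
  then have "card (X - {v}) \<le> card (colour_nbhd a Y v \<union> colour_nbhd j Y v)"
    using finite_colour_nbhd[OF Y] by (intro card_mono) auto
  also have "\<dots> \<le> card (colour_nbhd a Y v) + card (colour_nbhd j Y v)" by (rule card_Un_le)
  finally have "card (X - {v}) \<le> card (colour_nbhd a Y v) + card (colour_nbhd j Y v)" .
  moreover have "card (X - {v}) + 1 = card X"
    using card_Suc_Diff1[OF _ v] finite_colour_nbhd[OF Y] X_def by simp
  moreover have "card (colour_nbhd a Y v) < m" using sparse v XY by auto
  moreover have "n + m < card X" using big X_def by simp
  ultimately show False using small_j[OF v] n_large by linarith
qed

lemma card_le_colour_nbhd_in_sparse:
  assumes j: "j \<in> {k, k'}" and y: "y \<in> Y"
  shows "card Y \<le> card (colour_nbhd j Y y) + n + 2 * m"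
proof -
  obtain j' where cols: "distinct [a, j, j']" "j < 3" "j' < 3" "j' \<in> {k, k'}"
    using obtain_other_colour[OF j] .
  have "card Y \<le> card (colour_nbhd a Y y) + card (colour_nbhd j Y y) + card (colour_nbhd j' Y y) + 1"
    using card_le_colour_nbhds[OF Y y cols(1) colours(2) cols(2,3)] .
  moreover have "card (colour_nbhd a Y y) < m" using sparse y by auto
  ultimately show ?thesis using card_colour_nbhd_le_in_sparse[OF cols(4) y] by linarith
qed

text \<open>Otherwise \<open>u\<close> and \<open>v\<close> are the centres of a monochromatic double star.\<close>
lemma card_colour_nbhd_outside_le_in_sparse:
  assumes u: "u \<in> Y" and v: "v \<in> colour_nbhd k Y u"
  shows "card (colour_nbhd k Y u) + card (colour_nbhd k Y v - insert u (colour_nbhd k Y u)) \<le> n + m"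
proof (rule ccontr)
  assume many: "\<not> ?thesis"
  define X where "X = colour_nbhd k Y u"
  define A where "A = X - {v}"
  define B where "B = colour_nbhd k Y v - {u}"
  define C where "C = colour_nbhd k Y v - insert u X"
  have vX: "v \<in> X" and vY: "v \<in> Y" using v X_def colour_nbhd_def by auto
  have fin: "finite X" "finite A" "finite B" "finite C"
    using finite_colour_nbhd[OF Y] X_def A_def B_def C_def by auto
  have cA: "card A + 1 = card X" using card_Suc_Diff1[OF fin(1) vX] A_def by simp
  have "card (A \<union> C) \<le> card (A \<union> B)" using fin by (intro card_mono) (auto simp: B_def C_def)
  moreover have "card (A \<union> C) = card A + card C"
    using fin by (intro card_Un_disjoint) (auto simp: A_def C_def)
  moreover have "n + m < card X + card C" using many X_def C_def by simp
  ultimately have AB: "n + m \<le> card (A \<union> B)" using cA by linarith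
  have "card Y \<le> card X + n + 2 * m" "card Y \<le> card (colour_nbhd k Y v) + n + 2 * m"
    using card_le_colour_nbhd_in_sparse[of k] u vY X_def by auto
  moreover have "card B + 1 = card (colour_nbhd k Y v)"
    using card_Suc_Diff1[OF finite_colour_nbhd[OF Y] colour_nbhd_sym[OF Y u v]] B_def by simp
  ultimately have "n \<le> card A" "m \<le> card B" using cA large n_large by linarith+
  moreover have "A \<subseteq> colour_nbhd k Y u - {v}" "B \<subseteq> colour_nbhd k Y v - {u}"
    using A_def B_def X_def by auto
  ultimately show False using no_double_star_nbhds[OF Y u v _ _ _ _ AB] by blast
qed

text \<open>Colour \<open>a\<close> is sparse and, by the previous lemma, \<open>v\<close> has few \<open>k\<close>-neighbours outside
  \<open>colour_nbhd k Y u\<close>, so \<open>v\<close> sees most vertices there in colour \<open>k'\<close>.\<close>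
lemma card_le_colour_nbhd_outside_in_sparse:
  assumes u: "u \<in> Y" and v: "v \<in> colour_nbhd k Y u"
  shows "card Y \<le> card (colour_nbhd k' Y v - insert u (colour_nbhd k Y u)) + n + 2 * m"
proof -
  define X where "X = colour_nbhd k Y u"
  define Z where "Z = Y - insert u X"
  define C where "C = colour_nbhd k Y v - insert u X"
  define D where "D = colour_nbhd k' Y v - insert u X"
  have vY: "v \<in> Y" and vX: "v \<in> X" using v X_def colour_nbhd_def by auto
  have fin: "finite C" "finite D" using finite_colour_nbhd[OF Y] C_def D_def by auto
  have "Z \<subseteq> colour_nbhd a Y v \<union> C \<union> D"
  proof
    fix z assume z: "z \<in> Z"
    then have "z \<in> Y" "z \<noteq> v" using Z_def vX by auto
    then have "c v z < 3" using colour_less_3 Y vY by blast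
    then have "c v z = a \<or> c v z = k \<or> c v z = k'" using colour_cases_3[OF colours] by blast
    then show "z \<in> colour_nbhd a Y v \<union> C \<union> D"
      using z \<open>z \<in> Y\<close> \<open>z \<noteq> v\<close> unfolding C_def D_def Z_def colour_nbhd_def by auto
  qed
  then have "card Z \<le> card (colour_nbhd a Y v \<union> C \<union> D)"
    using fin finite_colour_nbhd[OF Y] by (intro card_mono) auto
  also have "\<dots> \<le> card (colour_nbhd a Y v) + card C + card D"
    using card_Un_le[of "colour_nbhd a Y v \<union> C" D] card_Un_le[of "colour_nbhd a Y v" C] by linarith
  finally have "card Z \<le> card (colour_nbhd a Y v) + card C + card D" .
  moreover have "card (colour_nbhd a Y v) < m" using sparse vY by auto
  moreover have "card Z + card X + 1 = card Y"
    using card_outside_colour_nbhd[OF Y u] X_def Z_def by simp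
  moreover have "card X + card C \<le> n + m"
    using card_colour_nbhd_outside_le_in_sparse[OF u v] X_def C_def by simp
  ultimately have "card Y \<le> card D + n + 2 * m" by linarith
  then show ?thesis unfolding D_def X_def .
qed

lemma card_frequent_partner_lt:
  assumes u: "u \<in> Y" and z: "z \<in> Y - insert u (colour_nbhd k Y u)"
  shows "card {v \<in> colour_nbhd k Y u. c v z = k'} < m"
proof (rule ccontr)
  assume many: "\<not> ?thesis"
  define X where "X = colour_nbhd k Y u"
  define W where "W = {v \<in> X. c v z = k'}"
  have mW: "m \<le> card W" using many W_def X_def by simp
  then have "W \<noteq> {}" using m_pos by auto
  then obtain v where v: "v \<in> X" "c v z = k'" using W_def by auto
  have XY: "X \<subseteq> Y" using X_def colour_nbhd_def by auto
  have vY: "v \<in> Y" and zY: "z \<in> Y" and zX: "z \<notin> X" and "z \<noteq> v" using v z XY X_def by auto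
  then have zv: "z \<in> colour_nbhd k' Y v" using v(2) unfolding colour_nbhd_def by auto
  have vz: "v \<in> colour_nbhd k' Y z" using colour_nbhd_sym[OF Y vY zv] .
  define D where "D = colour_nbhd k' Y v - insert u X"
  define A where "A = D - {z}"
  define B where "B = colour_nbhd k' Y z - {v}"
  have fin: "finite D" "finite B" "finite W"
    using finite_colour_nbhd[OF Y] finite_subset[OF XY finite_subset[OF Y finite_lessThan]]
    unfolding D_def B_def W_def by auto
  have q: "2 * n + 2 * m + 2 \<le> card Y" using large n_large by linarith
  have "z \<in> D" using zv z X_def D_def by auto
  then have "card A + 1 = card D" using card_Suc_Diff1[OF fin(1)] A_def by simp
  moreover have "card Y \<le> card D + n + 2 * m"
    using card_le_colour_nbhd_outside_in_sparse[OF u, of v] v X_def D_def by simp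
  ultimately have cA: "n + 1 \<le> card A" using q by linarith
  have "card B + 1 = card (colour_nbhd k' Y z)"
    using card_Suc_Diff1[OF finite_colour_nbhd[OF Y] vz] B_def by simp
  moreover have "card Y \<le> card (colour_nbhd k' Y z) + n + 2 * m"
    using card_le_colour_nbhd_in_sparse[of k' z] zY by simp
  ultimately have cB: "m \<le> card B" using q n_large by linarith
  have "W - {v} \<subseteq> B"
  proof
    fix w assume w: "w \<in> W - {v}"
    then have "w \<in> Y" "w \<noteq> z" "c w z = k'" using W_def XY zX by auto
    then have "c z w = k'" using colour_sym_on[OF Y zY, of w] by simp
    then show "w \<in> B" using w \<open>w \<in> Y\<close> \<open>w \<noteq> z\<close> B_def unfolding colour_nbhd_def by auto
  qed
  then have "A \<union> (W - {v}) \<subseteq> A \<union> B" by blast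
  then have "card (A \<union> (W - {v})) \<le> card (A \<union> B)" using fin A_def by (intro card_mono) auto
  moreover have "card (A \<union> (W - {v})) = card A + card (W - {v})"
    using fin A_def D_def W_def by (intro card_Un_disjoint) auto
  moreover have "card (W - {v}) + 1 = card W" using card_Suc_Diff1[OF fin(3)] v W_def by simp
  ultimately have "n + m \<le> card (A \<union> B)" using cA mW by linarith
  moreover have "A \<subseteq> colour_nbhd k' Y v - {z}" "B \<subseteq> colour_nbhd k' Y z - {v}"
    using A_def D_def B_def by auto
  moreover have "n \<le> card A" using cA by simp
  ultimately show False using no_double_star_nbhds[OF Y vY zv _ _ _ cB] by blast
qed

text \<open>Double counting the \<open>k'\<close>-edges between the \<open>k\<close>-neighbourhood of a vertex and the
  rest of \<open>Y\<close> contradicts \<open>card_frequent_partner_lt\<close>.\<close>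
lemma no_large_sparse_colour_set: False
proof -
  have q: "2 * n + 2 * m + 2 \<le> card Y" using large n_large by linarith
  then obtain u where u: "u \<in> Y" by fastforce
  define X where "X = colour_nbhd k Y u"
  define Z where "Z = Y - insert u X"
  define q where "q = card Y - (n + 2 * m)"
  have fin: "finite X" "finite Z"
    using finite_colour_nbhd[OF Y] finite_subset[OF Y finite_lessThan] X_def Z_def by auto
  have cZ: "card Z + card X + 1 = card Y"
    using card_outside_colour_nbhd[OF Y u] X_def Z_def by simp
  have cX: "q \<le> card X" using card_le_colour_nbhd_in_sparse[of k u] u X_def q_def by simp
  have deg: "q \<le> card {z\<in>Z. c v z = k'}" if "v \<in> X" for v
  proof -
    have "{z\<in>Z. c v z = k'} = colour_nbhd k' Y v - insert u X"
      using that unfolding Z_def X_def colour_nbhd_def by auto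
    then show ?thesis
      using card_le_colour_nbhd_outside_in_sparse[OF u, of v] that X_def q_def by simp
  qed
  have "card Z * (m - 1) \<le> (2 * n) * m" using cZ cX q q_def n_large by (intro mult_mono) auto
  also have "\<dots> = n * (2 * m)" by simp
  also have "\<dots> < n * n" using n_large by (intro mult_strict_left_mono) auto
  also have "\<dots> \<le> card X * q" using cX q q_def by (intro mult_mono) auto
  finally obtain z where "z \<in> Z" "m - 1 < card {v\<in>X. c v z = k'}"
    using obtain_frequent_partner[of X Z q "\<lambda>v z. c v z = k'" "m - 1", OF fin deg] by blast
  then show False using card_frequent_partner_lt[OF u, of z] X_def Z_def by simp
qed

end

lemma card_sparse_colour_set:
  assumes "Y \<subseteq> {..<N}" "distinct [a, k, k']" "a < 3" "k < 3" "k' < 3"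
    and "\<forall>y\<in>Y. card (colour_nbhd a Y y) < m"
  shows "2 * card Y + 2 * m + 1 < 5 * n"
proof (rule ccontr)
  assume "\<not> ?thesis"
  then have "5 * n \<le> 2 * card Y + 2 * m + 1" by linarith
  from no_large_sparse_colour_set[OF assms(1-5) this assms(6)] show False .
qed

end

section \<open>Components of a disconnected colour class\<close>

locale gallai_partition = double_star_free +
  fixes g a b :: nat
  assumes colours: "distinct [g, a, b]" "g < 3" "a < 3" "b < 3"
    and disconnected: "\<And>u. u < N \<Longrightarrow> \<exists>w<N. w \<notin> colour_component g {..<N} u"
    and N_large: "n + 3 * (n div 2) + 1 \<le> N"
begin

abbreviation component :: "nat \<Rightarrow> nat set" where
  "component u \<equiv> colour_component g {..<N} u"

definition outer_nbhd :: "nat \<Rightarrow> nat \<Rightarrow> nat set" where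
  "outer_nbhd k u = {w. w < N \<and> w \<notin> component u \<and> c u w = k}"

lemma N_bounds: "5 * n \<le> 2 * N + 1" "2 * n + 3 * m + 3 \<le> N" "n < 3 * (N - 2 * n)"
proof -
  have "n \<le> 2 * (n div 2) + 1" by simp
  then show "5 * n \<le> 2 * N + 1" "2 * n + 3 * m + 3 \<le> N" "n < 3 * (N - 2 * n)"
    using N_large n_large by linarith+
qed

lemma other_colours:
  assumes "{k, k'} = {a, b}"
  shows "distinct [g, k, k']" "k < 3" "k' < 3"
  using assms colours by (auto simp: doubleton_eq_iff)

lemma mem_component: "u < N \<Longrightarrow> u \<in> component u"
  using mem_colour_component by simp

lemma component_subset: "u < N \<Longrightarrow> component u \<subseteq> {..<N}"
  using colour_component_subset by simp

lemma finite_component: "u < N \<Longrightarrow> finite (component u)"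
  using component_subset finite_subset by blast

lemma component_sym: "u < N \<Longrightarrow> w < N \<Longrightarrow> w \<notin> component u \<Longrightarrow> u \<notin> component w"
  using colour_component_sym by simp

lemma component_disjoint:
  "u < N \<Longrightarrow> w < N \<Longrightarrow> w \<notin> component u \<Longrightarrow> t \<in> component w \<Longrightarrow> t \<notin> component u"
  using colour_component_disjoint[of "{..<N}" u w g t] by simp

lemma colour_outside_component:
  assumes "u < N" "w < N" "w \<notin> component u"
  shows "c u w = a \<or> c u w = b"
proof -
  have "c u w \<noteq> g" using colour_leaving_component[of u "{..<N}" w g] assms by simp
  moreover have "c u w < 3" using colour_less_3 assms mem_component by blast
  ultimately show ?thesis using colour_cases_3[OF colours] by blast
qed

lemma colour_to_component:
  "u < N \<Longrightarrow> w < N \<Longrightarrow> w \<notin> component u \<Longrightarrow> t \<in> component u \<Longrightarrow> c w t = c w u"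
  using colour_to_component_const[of "{..<N}" u w g t u] mem_component by simp

lemma outer_nbhd_subset: "outer_nbhd k u \<subseteq> {..<N}"
  unfolding outer_nbhd_def by auto

lemma finite_outer_nbhd: "finite (outer_nbhd k u)"
  using outer_nbhd_subset finite_subset by blast

lemma outer_nbhd_subset_colour_nbhd: "u < N \<Longrightarrow> outer_nbhd k u \<subseteq> colour_nbhd k {..<N} u"
  unfolding outer_nbhd_def colour_nbhd_def using mem_component by auto

lemma card_component_outer_nbhds:
  assumes u: "u < N" and kk: "{k, k'} = {a, b}"
  shows "card (component u) + card (outer_nbhd k u) + card (outer_nbhd k' u) = N"
proof -
  have kk': "k \<noteq> k'" "c u w = k \<or> c u w = k' \<longleftrightarrow> c u w = a \<or> c u w = b" for w
    using kk colours by (auto simp: doubleton_eq_iff)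
  have "{..<N} = component u \<union> (outer_nbhd k u \<union> outer_nbhd k' u)"
    using component_subset[OF u] colour_outside_component[OF u] kk' unfolding outer_nbhd_def by auto
  moreover have "card (component u \<union> (outer_nbhd k u \<union> outer_nbhd k' u))
      = card (component u) + card (outer_nbhd k u \<union> outer_nbhd k' u)"
    using finite_component[OF u] finite_outer_nbhd by (intro card_Un_disjoint) (auto simp: outer_nbhd_def)
  moreover have "card (outer_nbhd k u \<union> outer_nbhd k' u) = card (outer_nbhd k u) + card (outer_nbhd k' u)"
    using finite_outer_nbhd kk' by (intro card_Un_disjoint) (auto simp: outer_nbhd_def)
  ultimately show ?thesis by (metis card_lessThan add.assoc)
qed

lemma component_subset_outer_nbhd:
  assumes u: "u < N" and w: "w < N" "w \<notin> component u"
  shows "component u \<subseteq> outer_nbhd (c w u) w"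
proof
  fix t assume t: "t \<in> component u"
  have "t \<notin> component w" using component_disjoint[OF w(1) u component_sym[OF u w] t] .
  moreover have "c w t = c w u" using colour_to_component[OF u w t] .
  moreover have "t < N" using component_subset[OF u] t by auto
  ultimately show "t \<in> outer_nbhd (c w u) w" unfolding outer_nbhd_def by auto
qed

lemma outer_nbhd_component_subset:
  assumes u: "u < N" and w: "w \<in> outer_nbhd k u"
  shows "component w \<subseteq> outer_nbhd k u"
proof
  fix t assume t: "t \<in> component w"
  have w': "w < N" "w \<notin> component u" "c u w = k" using w unfolding outer_nbhd_def by auto
  have "t \<notin> component u" using component_disjoint[OF u w'(1,2) t] .
  moreover have "c u t = c u w" using colour_to_component[OF w'(1) u component_sym[OF u w'(1,2)] t] .
  moreover have "t < N" using component_subset[OF w'(1)] t by auto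
  ultimately show "t \<in> outer_nbhd k u" using w' unfolding outer_nbhd_def by auto
qed

lemma card_outer_nbhd_le_if_big_component:
  assumes u: "u < N" and big: "m < card (component u)"
  shows "card (outer_nbhd k u) \<le> n"
proof (rule ccontr)
  assume many: "\<not> ?thesis"
  then obtain v where v: "v \<in> outer_nbhd k u" by fastforce
  have v': "v < N" "v \<notin> component u" "c u v = k" using v unfolding outer_nbhd_def by auto
  have uv: "v \<in> colour_nbhd k {..<N} u" using outer_nbhd_subset_colour_nbhd[OF u] v by auto
  define A where "A = outer_nbhd k u - {v}"
  define B where "B = component u - {u}"
  have A: "A \<subseteq> colour_nbhd k {..<N} u - {v}" using outer_nbhd_subset_colour_nbhd[OF u] A_def by auto
  have B: "B \<subseteq> colour_nbhd k {..<N} v - {u}"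
  proof
    fix t assume t: "t \<in> B"
    then have tK: "t \<in> component u" "t \<noteq> u" using B_def by auto
    have "c v t = c v u" using colour_to_component[OF u v'(1,2) tK(1)] .
    also have "\<dots> = k" using colour_sym[OF v'(1) u] v' mem_component[OF u] by auto
    finally show "t \<in> colour_nbhd k {..<N} v - {u}"
      using component_subset[OF u] tK v' unfolding colour_nbhd_def by auto
  qed
  have "card A + 1 = card (outer_nbhd k u)" using card_Suc_Diff1[OF finite_outer_nbhd v] A_def by simp
  moreover have "card B + 1 = card (component u)"
    using card_Suc_Diff1[OF finite_component[OF u] mem_component[OF u]] B_def by simp
  moreover have "card (A \<union> B) = card A + card B"
    using finite_outer_nbhd finite_component[OF u]
    by (intro card_Un_disjoint) (auto simp: A_def B_def outer_nbhd_def)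
  ultimately show False
    using no_double_star_nbhds[OF _ _ uv A B] u many big by simp
qed

lemma card_outer_nbhd_of_neighbour_le:
  assumes u: "u < N" and big: "n + m < card (outer_nbhd k u)" and v: "v \<in> outer_nbhd k u"
  shows "card (outer_nbhd k v) \<le> m"
proof -
  have vN: "v < N" using v outer_nbhd_subset by auto
  have "card (outer_nbhd k u) \<le> card (colour_nbhd k {..<N} u)"
    using outer_nbhd_subset_colour_nbhd[OF u] finite_colour_nbhd by (intro card_mono) auto
  then have "card (colour_nbhd k {..<N} v) \<le> m"
    using card_nbhd_of_neighbour_le[of "{..<N}" u v k] u v big outer_nbhd_subset_colour_nbhd[OF u]
    by auto
  moreover have "card (outer_nbhd k v) \<le> card (colour_nbhd k {..<N} v)"
    using outer_nbhd_subset_colour_nbhd[OF vN] finite_colour_nbhd by (intro card_mono) auto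
  ultimately show ?thesis by linarith
qed

lemma card_colour_nbhd_le_of_big_component:
  assumes u: "u < N" and big: "n + m < card (component u)"
    and w: "w \<in> outer_nbhd k u" and y: "y \<in> component u"
  shows "card (colour_nbhd k {..<N} y) \<le> m"
proof -
  have w': "w < N" "w \<notin> component u" "c u w = k" using w unfolding outer_nbhd_def by auto
  have "c w u = k" using colour_sym[OF w'(1) u] w' mem_component[OF u] by auto
  then have sub: "component u \<subseteq> colour_nbhd k {..<N} w"
    using component_subset_outer_nbhd[OF u w'(1,2)] outer_nbhd_subset_colour_nbhd[OF w'(1)] by auto
  then have "card (component u) \<le> card (colour_nbhd k {..<N} w)"
    using finite_colour_nbhd by (intro card_mono) auto
  then show ?thesis using card_nbhd_of_neighbour_le[of "{..<N}" w y k] w' sub y big by auto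
qed

text \<open>If all outside neighbours of the component were \<open>k\<close>-coloured, colour \<open>k\<close> would be sparse
  inside it, and the component would be too large for \<open>card_sparse_colour_set\<close>.\<close>
lemma outer_nbhd_nonempty:
  assumes u: "u < N" and big: "n + m < card (component u)" and kk: "{k, k'} = {a, b}"
  shows "outer_nbhd k' u \<noteq> {}"
proof
  assume empty: "outer_nbhd k' u = {}"
  obtain w where w: "w < N" "w \<notin> component u" using disconnected u by blast
  have "c u w = k"
    using colour_outside_component[OF u w] empty kk w unfolding outer_nbhd_def
    by (auto simp: doubleton_eq_iff)
  then have wX: "w \<in> outer_nbhd k u" using w unfolding outer_nbhd_def by auto
  have "card (outer_nbhd k u) \<le> card (colour_nbhd k {..<N} u)"
    using outer_nbhd_subset_colour_nbhd[OF u] finite_colour_nbhd by (intro card_mono) auto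
  also have "\<dots> \<le> m" using card_colour_nbhd_le_of_big_component[OF u big wX mem_component[OF u]] .
  finally have "N \<le> card (component u) + m"
    using card_component_outer_nbhds[OF u kk] empty by simp
  moreover have sparse: "card (colour_nbhd k (component u) y) < m" if y: "y \<in> component u" for y
  proof -
    have yN: "y < N" using component_subset[OF u] y by auto
    have "w \<noteq> u" "w \<noteq> y" using w y mem_component[OF u] by auto
    then have "c y w = k"
      using colour_to_component[OF u w y] colour_sym[OF u w(1)] colour_sym[OF yN w(1)] \<open>c u w = k\<close>
      by auto
    then have "w \<in> colour_nbhd k {..<N} y" using w \<open>w \<noteq> y\<close> unfolding colour_nbhd_def by auto
    moreover have "colour_nbhd k (component u) y \<subseteq> colour_nbhd k {..<N} y"
      using colour_nbhd_mono[OF component_subset[OF u]] .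
    moreover have w_out: "w \<notin> colour_nbhd k (component u) y" using w unfolding colour_nbhd_def by auto
    ultimately have "insert w (colour_nbhd k (component u) y) \<subseteq> colour_nbhd k {..<N} y" by auto
    then have "card (insert w (colour_nbhd k (component u) y)) \<le> card (colour_nbhd k {..<N} y)"
      using finite_colour_nbhd by (intro card_mono) auto
    then show ?thesis
      using card_colour_nbhd_le_of_big_component[OF u big wX y] w_out
        finite_colour_nbhd[OF component_subset[OF u]] by simp
  qed
  moreover have "distinct [k, k', g]" "k < 3" "k' < 3" using other_colours[OF kk] by auto
  then have "2 * card (component u) + 2 * m + 1 < 5 * n"
    using card_sparse_colour_set[OF component_subset[OF u] _ _ _ colours(2)] sparse by blast
  ultimately show False using N_bounds by linarith
qed

lemma card_component_le:
  assumes u: "u < N"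
  shows "card (component u) \<le> n + m"
proof (rule ccontr)
  assume "\<not> ?thesis"
  then have big: "n + m < card (component u)" by simp
  obtain wa wb where wa: "wa \<in> outer_nbhd a u" and wb: "wb \<in> outer_nbhd b u"
    using outer_nbhd_nonempty[OF u big, of b a] outer_nbhd_nonempty[OF u big, of a b]
    by (auto simp: insert_commute)
  have big_g: "n + m < card (colour_nbhd g {..<N} y)" if y: "y \<in> component u" for y
  proof -
    have "y < N" using component_subset[OF u] y by auto
    then have "N \<le> card (colour_nbhd a {..<N} y) + card (colour_nbhd b {..<N} y)
        + card (colour_nbhd g {..<N} y) + 1"
      using card_le_colour_nbhds[of "{..<N}" y a b g] colours by auto
    then show ?thesis
      using card_colour_nbhd_le_of_big_component[OF u big wa y]
        card_colour_nbhd_le_of_big_component[OF u big wb y] N_bounds by linarith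
  qed
  then have "colour_nbhd g {..<N} u \<noteq> {}" using mem_component[OF u] by fastforce
  then obtain y where y: "y \<in> colour_nbhd g {..<N} u" by blast
  have "y \<in> component u"
  proof (rule ccontr)
    assume "y \<notin> component u"
    then have "c u y = a \<or> c u y = b" using colour_outside_component[OF u] y unfolding colour_nbhd_def by auto
    then show False using y colours unfolding colour_nbhd_def by auto
  qed
  then show False
    using card_nbhd_of_neighbour_le[of "{..<N}" u y g] u y big_g mem_component[OF u] by fastforce
qed

lemma card_outer_nbhd_le:
  assumes j: "j < N" and kk: "{k, k'} = {a, b}"
  shows "card (outer_nbhd k j) \<le> n + m"
proof (rule ccontr)
  assume "\<not> ?thesis"
  then have big: "n + m < card (outer_nbhd k j)" by simp
  have kk': "{k', k} = {a, b}" using kk by auto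
  have props: "card (outer_nbhd k v) \<le> m \<and> card (component v) \<le> m \<and> n + m < card (outer_nbhd k' v)"
    if v: "v \<in> outer_nbhd k j" for v
  proof -
    have vN: "v < N" using v outer_nbhd_subset by auto
    have small: "card (outer_nbhd k v) \<le> m" using card_outer_nbhd_of_neighbour_le[OF j big v] .
    have part: "card (component v) + card (outer_nbhd k v) + card (outer_nbhd k' v) = N"
      using card_component_outer_nbhds[OF vN kk] .
    have "card (component v) \<le> m"
    proof (rule ccontr)
      assume "\<not> ?thesis"
      then have "card (outer_nbhd k' v) \<le> n" using card_outer_nbhd_le_if_big_component[OF vN] by simp
      then show False using part small card_component_le[OF vN] N_bounds by linarith
    qed
    then show ?thesis using small part N_bounds by linarith
  qed
  obtain v where v: "v \<in> outer_nbhd k j" using big by fastforce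
  have vN: "v < N" using v outer_nbhd_subset by auto
  have "\<not> outer_nbhd k j \<subseteq> component v \<union> outer_nbhd k v"
  proof
    assume "outer_nbhd k j \<subseteq> component v \<union> outer_nbhd k v"
    then have "card (outer_nbhd k j) \<le> card (component v \<union> outer_nbhd k v)"
      using finite_component[OF vN] finite_outer_nbhd by (intro card_mono) auto
    also have "\<dots> \<le> card (component v) + card (outer_nbhd k v)" by (rule card_Un_le)
    moreover have "card (component v) \<le> m" "card (outer_nbhd k v) \<le> m" using props[OF v] by auto
    ultimately show False using big n_large by linarith
  qed
  then obtain v' where v': "v' \<in> outer_nbhd k j" "v' \<notin> component v" "v' \<notin> outer_nbhd k v" by blast
  have v'N: "v' < N" using v' outer_nbhd_subset by auto
  have "c v v' = k'"
    using colour_outside_component[OF vN v'N v'(2)] v' kk v'N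
    unfolding outer_nbhd_def by (auto simp: doubleton_eq_iff)
  then have "v' \<in> outer_nbhd k' v" using v' v'N unfolding outer_nbhd_def by auto
  then have "card (outer_nbhd k' v') \<le> m"
    using card_outer_nbhd_of_neighbour_le[OF vN] props[OF v] by blast
  then show False using props[OF v'(1)] by linarith
qed

lemma card_component_gt:
  assumes j: "j < N"
  shows "m < card (component j)"
  using card_component_outer_nbhds[OF j, of a b] card_outer_nbhd_le[OF j, of a b]
    card_outer_nbhd_le[OF j, of b a] N_bounds by (simp add: insert_commute)

lemma card_outer_nbhd_le_n: "u < N \<Longrightarrow> card (outer_nbhd k u) \<le> n"
  using card_outer_nbhd_le_if_big_component card_component_gt by blast

lemma card_le_component_plus: "u < N \<Longrightarrow> N \<le> card (component u) + 2 * n"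
  using card_component_outer_nbhds[of u a b] card_outer_nbhd_le_n[of u a] card_outer_nbhd_le_n[of u b]
  by simp

lemma exists_vertex_seeing_components_alike:
  assumes u: "u < N" and w: "w < N" "w \<notin> component u"
  obtains x where "x < N" "x \<notin> component u" "x \<notin> component w" "c x u = c x w"
proof (rule ccontr)
  assume no: "\<not> thesis"
  define k where "k = c u w"
  have uw: "u \<notin> component w" using component_sym[OF u w] .
  have ku: "k = a \<or> k = b" using colour_outside_component[OF u w] k_def by auto
  have "{..<N} \<subseteq> outer_nbhd k u \<union> outer_nbhd k w"
  proof
    fix x assume "x \<in> {..<N}"
    then have xN: "x < N" by auto
    consider "x \<in> component u" | "x \<in> component w" | "x \<notin> component u" "x \<notin> component w" by blast
    then show "x \<in> outer_nbhd k u \<union> outer_nbhd k w"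
    proof cases
      case 1
      have "c w u = k" using k_def colour_sym[OF w(1) u] w mem_component[OF u] by auto
      then show ?thesis using component_subset_outer_nbhd[OF u w] 1 by auto
    next
      case 2
      then show ?thesis using component_subset_outer_nbhd[OF w(1) u uw] k_def by auto
    next
      case 3
      have "c x u \<noteq> c x w" using no xN 3 that by blast
      moreover have "c x u = a \<or> c x u = b" "c x w = a \<or> c x w = b"
        using colour_outside_component[OF xN u component_sym[OF u xN 3(1)]]
          colour_outside_component[OF xN w(1) component_sym[OF w(1) xN 3(2)]] by auto
      ultimately have "c x u = k \<or> c x w = k" using ku colours by auto
      moreover have "x \<noteq> u" "x \<noteq> w" using 3 mem_component u w by auto
      ultimately have "c u x = k \<or> c w x = k" using colour_sym xN u w by metis
      then show ?thesis using xN 3 unfolding outer_nbhd_def by auto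
    qed
  qed
  then have "card {..<N} \<le> card (outer_nbhd k u \<union> outer_nbhd k w)"
    using finite_outer_nbhd by (intro card_mono) auto
  also have "\<dots> \<le> card (outer_nbhd k u) + card (outer_nbhd k w)" by (rule card_Un_le)
  finally show False
    using card_outer_nbhd_le_n[OF u, of k] card_outer_nbhd_le_n[OF w(1), of k] N_bounds by simp
qed

lemma card_component_pair_le:
  assumes u: "u < N" and w: "w < N" "w \<notin> component u"
  shows "card (component u) + card (component w) \<le> n"
proof -
  obtain x where x: "x < N" "x \<notin> component u" "x \<notin> component w" "c x u = c x w"
    using exists_vertex_seeing_components_alike[OF u w] .
  have "component u \<union> component w \<subseteq> outer_nbhd (c x u) x"
    using component_subset_outer_nbhd[OF u x(1,2)] component_subset_outer_nbhd[OF w(1) x(1,3)] x(4)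
    by auto
  then have "card (component u \<union> component w) \<le> card (outer_nbhd (c x u) x)"
    using finite_outer_nbhd by (intro card_mono) auto
  moreover have "card (component u \<union> component w) = card (component u) + card (component w)"
    using finite_component u w component_disjoint[OF u w] by (intro card_Un_disjoint) auto
  ultimately show ?thesis using card_outer_nbhd_le_n[OF x(1), of "c x u"] by linarith
qed

text \<open>Each component has more than \<open>N - 2 n > n / 3\<close> vertices, while an outer neighbourhood,
  a union of components, has at most \<open>n\<close>.\<close>
lemma no_three_components_in_outer_nbhd:
  assumes u: "u < N" and x: "x\<^sub>1 \<in> outer_nbhd k u" "x\<^sub>2 \<in> outer_nbhd k u" "x\<^sub>3 \<in> outer_nbhd k u"
    and distinct: "x\<^sub>2 \<notin> component x\<^sub>1" "x\<^sub>3 \<notin> component x\<^sub>1" "x\<^sub>3 \<notin> component x\<^sub>2"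
  shows False
proof -
  have xN: "x\<^sub>1 < N" "x\<^sub>2 < N" "x\<^sub>3 < N" using x outer_nbhd_subset by auto
  have "component x\<^sub>1 \<union> component x\<^sub>2 \<union> component x\<^sub>3 \<subseteq> outer_nbhd k u"
    using outer_nbhd_component_subset[OF u] x by blast
  then have "card (component x\<^sub>1 \<union> component x\<^sub>2 \<union> component x\<^sub>3) \<le> n"
    using card_mono[OF finite_outer_nbhd] card_outer_nbhd_le_n[OF u, of k] le_trans by blast
  moreover have "component x\<^sub>1 \<inter> component x\<^sub>2 = {}"
    "(component x\<^sub>1 \<union> component x\<^sub>2) \<inter> component x\<^sub>3 = {}"
    using component_disjoint xN distinct by blast+
  then have "card (component x\<^sub>1 \<union> component x\<^sub>2 \<union> component x\<^sub>3)
      = card (component x\<^sub>1) + card (component x\<^sub>2) + card (component x\<^sub>3)"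
    using finite_component xN by (simp add: card_Un_disjoint)
  ultimately show False
    using card_le_component_plus[OF xN(1)] card_le_component_plus[OF xN(2)]
      card_le_component_plus[OF xN(3)] N_bounds by linarith
qed

lemma card_outer_nbhd_le_twice:
  assumes u: "u < N" and bound: "\<forall>x\<in>outer_nbhd k u. card (component x) \<le> M"
  shows "card (outer_nbhd k u) \<le> 2 * M"
proof (cases "outer_nbhd k u = {}")
  case False
  then obtain x\<^sub>1 where x\<^sub>1: "x\<^sub>1 \<in> outer_nbhd k u" by blast
  show ?thesis
  proof (cases "outer_nbhd k u \<subseteq> component x\<^sub>1")
    case True
    then have "card (outer_nbhd k u) \<le> card (component x\<^sub>1)"
      using finite_component x\<^sub>1 outer_nbhd_subset by (intro card_mono) blast+
    then show ?thesis using bound x\<^sub>1 by fastforce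
  next
    case False
    then obtain x\<^sub>2 where x\<^sub>2: "x\<^sub>2 \<in> outer_nbhd k u" "x\<^sub>2 \<notin> component x\<^sub>1" by blast
    have "outer_nbhd k u \<subseteq> component x\<^sub>1 \<union> component x\<^sub>2"
      using no_three_components_in_outer_nbhd[OF u x\<^sub>1 x\<^sub>2(1) _ x\<^sub>2(2)] by blast
    moreover have "x\<^sub>1 < N" "x\<^sub>2 < N" using x\<^sub>1 x\<^sub>2 outer_nbhd_subset by auto
    ultimately have "card (outer_nbhd k u) \<le> card (component x\<^sub>1 \<union> component x\<^sub>2)"
      using finite_component by (intro card_mono) auto
    also have "\<dots> \<le> card (component x\<^sub>1) + card (component x\<^sub>2)" by (rule card_Un_le)
    moreover have "card (component x\<^sub>1) \<le> M" "card (component x\<^sub>2) \<le> M" using bound x\<^sub>1 x\<^sub>2 by auto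
    ultimately show ?thesis by linarith
  qed
qed simp

text \<open>Let \<open>M\<close> be the largest component size. Every vertex outside a largest component lies in
  a component of size at most \<open>min M (n - M)\<close>, so \<open>N \<le> M + 4 min M (n - M)\<close>, which is less
  than \<open>n + 3 \<lfloor>n/2\<rfloor> + 1\<close>.\<close>
lemma no_gallai_partition: False
proof -
  have "0 < N" using N_bounds by linarith
  moreover have "\<forall>w. w < N \<longrightarrow> card (component w) < N + 1"
    using card_mono[OF finite_lessThan component_subset] by (simp add: le_imp_less_Suc)
  ultimately obtain u where u: "u < N" and umax: "\<forall>w. w < N \<longrightarrow> card (component w) \<le> card (component u)"
    using Lattices_Big.ex_has_greatest_nat[of "\<lambda>u. u < N" 0 "\<lambda>u. card (component u)"] by blast
  define M where "M = card (component u)"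
  obtain w where w: "w < N" "w \<notin> component u" using disconnected u by blast
  have "M \<le> n" using card_component_pair_le[OF u w] M_def by linarith
  have outer: "x < N \<and> x \<notin> component u" if "x \<in> outer_nbhd k u" for x k
    using that unfolding outer_nbhd_def by auto
  have "card (component x) \<le> min M (n - M)" if "x \<in> outer_nbhd k u" for x k
    using umax card_component_pair_le[OF u] outer[OF that] M_def by fastforce
  then have "card (outer_nbhd a u) \<le> 2 * min M (n - M)" "card (outer_nbhd b u) \<le> 2 * min M (n - M)"
    using card_outer_nbhd_le_twice[OF u] by blast+
  then have "N \<le> M + 4 * min M (n - M)"
    using card_component_outer_nbhds[OF u, of a b] M_def by simp
  moreover have "min M (n - M) \<le> M" "min M (n - M) \<le> n - M" by simp_all
  moreover have "n \<le> 2 * (n div 2) + 1" "2 * (n div 2) \<le> n" by simp_all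
  ultimately show False using N_large \<open>M \<le> n\<close> by (cases "M \<le> n div 2") linarith+
qed

end

context double_star_free
begin

theorem card_vertices_le: "N \<le> n + 3 * (n div 2)"
proof (rule ccontr)
  assume "\<not> ?thesis"
  then have N_large: "n + 3 * (n div 2) + 1 \<le> N" by simp
  then have "2 \<le> card {..<N}" using n_large by simp
  then obtain g T where g: "g < 3" and T: "T \<noteq> {}" "T \<subset> {..<N}" "colour_closed g {..<N} T"
    using gallai_cut[of "{..<N}"] by auto
  have disconnected: "\<exists>w<N. w \<notin> colour_component g {..<N} u" if "u < N" for u
    using exists_outside_component[OF _ T, of u] that by auto
  obtain a where a: "a < 3" "a \<noteq> g" using exists_third_colour by metis
  obtain b where b: "b < 3" "b \<noteq> g" "b \<noteq> a" using exists_third_colour by metis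
  interpret gallai_partition N c n m g a b
    by unfold_locales (use g a b disconnected N_large in auto)
  show False by (rule no_gallai_partition)
qed

end

theorem gallai_ramsey_upper:
  assumes c: "edge_coloring 3 N c" and "1 \<le> m" "6 * m + 7 \<le> n" "n + 3 * (n div 2) + 1 \<le> N"
  shows "has_rainbow_K3 N c \<or> has_mono_double_star n m N c"
proof (rule ccontr)
  assume none: "\<not> ?thesis"
  interpret double_star_free N c n m
  proof unfold_locales
    fix x y assume "x < N" "y < N" "x \<noteq> y"
    then show "c x y = c y x" "c x y < 3" using c unfolding edge_coloring_def by auto
  next
    fix x y z assume "x < N" "y < N" "z < N" "x \<noteq> y" "y \<noteq> z" "x \<noteq> z"
    then show "c x y = c y z \<or> c y z = c x z \<or> c x y = c x z"
      using none unfolding has_rainbow_K3_def by blast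
  qed (use none assms in auto)
  show False using card_vertices_le assms(4) by linarith
qed

section \<open>The lower bound construction\<close>

definition block :: "nat \<Rightarrow> nat \<Rightarrow> nat" where
  "block k x = min (x div k) 4"

text \<open>For \<open>p, q \<le> 4\<close>, \<open>(p + 5 - q) mod 5\<close> is \<open>p - q\<close> modulo 5: colour 0 joins consecutive
  vertices of the pentagon, colour 1 its diagonals, and colour 2 is used inside blocks.\<close>
definition pentagon_colour :: "nat \<Rightarrow> nat \<Rightarrow> nat" where
  "pentagon_colour p q = (if p = q then 2 else if (p + 5 - q) mod 5 \<in> {1, 4} then 0 else 1)"

definition blow_up_colour :: "nat \<Rightarrow> nat \<Rightarrow> nat \<Rightarrow> nat" where
  "blow_up_colour k x y = pentagon_colour (block k x) (block k y)"

lemma block_le: "block k x \<le> 4"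
  unfolding block_def by simp

lemma le_4_cases: "(p :: nat) \<le> 4 \<Longrightarrow> p = 0 \<or> p = 1 \<or> p = 2 \<or> p = 3 \<or> p = 4"
  by linarith

lemma pentagon_colour_sym: "p \<le> 4 \<Longrightarrow> q \<le> 4 \<Longrightarrow> pentagon_colour p q = pentagon_colour q p"
  by (drule le_4_cases, drule le_4_cases) (elim disjE; simp add: pentagon_colour_def)

lemma pentagon_colour_less_3: "pentagon_colour p q < 3"
  unfolding pentagon_colour_def by simp

lemma pentagon_no_rainbow:
  assumes "p \<le> 4" "q \<le> 4" "r \<le> 4"
  shows "pentagon_colour p q = pentagon_colour q r \<or> pentagon_colour q r = pentagon_colour p r
    \<or> pentagon_colour p q = pentagon_colour p r"
proof -
  consider "p = q" | "q = r" | "p = r" | "p \<noteq> q" "q \<noteq> r" "p \<noteq> r" by blast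
  then show ?thesis
  proof cases
    case 3
    then show ?thesis using pentagon_colour_sym assms by metis
  next
    case 4
    then have "pentagon_colour p q \<le> 1" "pentagon_colour q r \<le> 1" "pentagon_colour p r \<le> 1"
      unfolding pentagon_colour_def by auto
    then show ?thesis by linarith
  qed simp_all
qed

lemma pentagon_colour_class:
  assumes p: "p \<le> 4"
  obtains j\<^sub>1 j\<^sub>2 where "j\<^sub>1 \<noteq> j\<^sub>2" "\<And>q. q \<le> 4 \<Longrightarrow> pentagon_colour p q = t \<Longrightarrow> q = j\<^sub>1 \<or> q = j\<^sub>2"
proof -
  define d\<^sub>1 d\<^sub>2 :: nat
    where "d\<^sub>1 = (if t = 2 then 0 else if t = 0 then 1 else 2)"
      and "d\<^sub>2 = (if t = 2 then 1 else if t = 0 then 4 else 3)"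
  have "(p + d\<^sub>1) mod 5 \<noteq> (p + d\<^sub>2) mod 5"
    using le_4_cases[OF p] by (auto simp: d\<^sub>1_def d\<^sub>2_def)
  moreover have "q = (p + d\<^sub>1) mod 5 \<or> q = (p + d\<^sub>2) mod 5" if "q \<le> 4" "pentagon_colour p q = t" for q
    using le_4_cases[OF p] le_4_cases[OF that(1)] that(2)
    by (auto simp: pentagon_colour_def d\<^sub>1_def d\<^sub>2_def)
  ultimately show thesis using that by blast
qed

lemma card_block_le:
  assumes k: "0 < k" and L: "L \<le> 4 * k + r"
  shows "card {x. x < L \<and> block k x = j} \<le> (if j = 4 then r else k)"
proof -
  consider "j < 4" | "j = 4" | "4 < j" by linarith
  then show ?thesis
  proof cases
    case 1
    have "{x. x < L \<and> block k x = j} \<subseteq> {j * k..<(j + 1) * k}"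
    proof
      fix x assume "x \<in> {x. x < L \<and> block k x = j}"
      then have "\<not> x div k < j" "x div k < j + 1" using 1 unfolding block_def by auto
      then show "x \<in> {j * k..<(j + 1) * k}" using k by (auto simp: div_less_iff_less_mult)
    qed
    then have "card {x. x < L \<and> block k x = j} \<le> card {j * k..<(j + 1) * k}" by (intro card_mono) auto
    then show ?thesis using 1 by simp
  next
    case 2
    have "{x. x < L \<and> block k x = j} \<subseteq> {4 * k..<L}"
    proof
      fix x assume "x \<in> {x. x < L \<and> block k x = j}"
      then have "\<not> x div k < 4" "x < L" using 2 unfolding block_def by auto
      then show "x \<in> {4 * k..<L}" using k by (auto simp: div_less_iff_less_mult)
    qed
    then have "card {x. x < L \<and> block k x = j} \<le> card {4 * k..<L}" by (intro card_mono) auto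
    then show ?thesis using 2 L by simp
  next
    case 3
    then have empty: "{x. x < L \<and> block k x = j} = {}" using block_le[of k] by (auto simp: not_le[symmetric])
    show ?thesis unfolding empty by simp
  qed
qed

text \<open>Each colour class at a vertex lies in two blocks, which together have at most \<open>k + r\<close>
  vertices.\<close>
lemma card_blow_up_colour_class_le:
  assumes k: "0 < k" "k \<le> r" and L: "L \<le> 4 * k + r"
  shows "card {y. y < L \<and> blow_up_colour k x y = t} \<le> k + r"
proof -
  obtain j\<^sub>1 j\<^sub>2 where j: "j\<^sub>1 \<noteq> j\<^sub>2"
    "\<And>q. q \<le> 4 \<Longrightarrow> pentagon_colour (block k x) q = t \<Longrightarrow> q = j\<^sub>1 \<or> q = j\<^sub>2"
    using pentagon_colour_class[OF block_le] by blast
  have "{y. y < L \<and> blow_up_colour k x y = t}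
      \<subseteq> {y. y < L \<and> block k y = j\<^sub>1} \<union> {y. y < L \<and> block k y = j\<^sub>2}"
    using j(2)[OF block_le] unfolding blow_up_colour_def by blast
  then have "card {y. y < L \<and> blow_up_colour k x y = t}
      \<le> card ({y. y < L \<and> block k y = j\<^sub>1} \<union> {y. y < L \<and> block k y = j\<^sub>2})"
    by (intro card_mono) auto
  also have "\<dots> \<le> card {y. y < L \<and> block k y = j\<^sub>1} + card {y. y < L \<and> block k y = j\<^sub>2}"
    by (rule card_Un_le)
  also have "\<dots> \<le> (if j\<^sub>1 = 4 then r else k) + (if j\<^sub>2 = 4 then r else k)"
    using card_block_le[OF k(1) L, of j\<^sub>1] card_block_le[OF k(1) L, of j\<^sub>2] by linarith
  also have "\<dots> \<le> k + r" using j(1) k(2) by auto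
  finally show ?thesis .
qed

theorem gallai_ramsey_lower:
  assumes n: "2 \<le> n" and N: "N \<le> n + 3 * (n div 2)"
  shows "\<exists>c. edge_coloring 3 N c \<and> \<not> has_rainbow_K3 N c \<and> \<not> has_mono_double_star n m N c"
proof (intro exI conjI)
  define k where "k = n div 2"
  have k: "0 < k" "k \<le> n - k" "N \<le> 4 * k + (n - k)" using n N k_def by auto
  show "edge_coloring 3 N (blow_up_colour k)"
    unfolding edge_coloring_def blow_up_colour_def
    using pentagon_colour_sym[OF block_le block_le] pentagon_colour_less_3 by auto
  show "\<not> has_rainbow_K3 N (blow_up_colour k)"
    unfolding has_rainbow_K3_def blow_up_colour_def
    using pentagon_no_rainbow[OF block_le block_le block_le] by blast
  show "\<not> has_mono_double_star n m N (blow_up_colour k)"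
  proof
    assume "has_mono_double_star n m N (blow_up_colour k)"
    then obtain u v A where uv: "u < N" "v < N" "A \<subseteq> {..<N}" "card A = n" "v \<notin> A"
      "\<forall>a\<in>A. blow_up_colour k u a = blow_up_colour k u v"
      unfolding has_mono_double_star_def by blast
    have "insert v A \<subseteq> {y. y < N \<and> blow_up_colour k u y = blow_up_colour k u v}" using uv by auto
    then have "card (insert v A) \<le> card {y. y < N \<and> blow_up_colour k u y = blow_up_colour k u v}"
      by (intro card_mono) auto
    also have "\<dots> \<le> n" using card_blow_up_colour_class_le[OF k] k_def by simp
    finally show False using uv finite_subset[OF uv(3)] by simp
  qed
qed

theorem proposition1:
  fixes n m :: nat
  assumes "m \<ge> 1" and "n \<ge> 6 * m + 7"
  shows "gr_K3_double_star 3 n m =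
           (if even n then 5 * (n div 2) + 1 else 5 * ((n - 1) div 2) + 2)"
proof -
  have "gr_K3_double_star 3 n m = n + 3 * (n div 2) + 1"
    unfolding gr_K3_double_star_def
  proof (rule Least_equality)
    show "\<forall>c. edge_coloring 3 (n + 3 * (n div 2) + 1) c \<longrightarrow>
        has_rainbow_K3 (n + 3 * (n div 2) + 1) c \<or> has_mono_double_star n m (n + 3 * (n div 2) + 1) c"
      using gallai_ramsey_upper assms by blast
  next
    fix N assume "\<forall>c. edge_coloring 3 N c \<longrightarrow> has_rainbow_K3 N c \<or> has_mono_double_star n m N c"
    then show "n + 3 * (n div 2) + 1 \<le> N"
      using gallai_ramsey_lower[of n N m] assms by force
  qed
  then show ?thesis by (auto elim!: evenE oddE)
qed

end
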